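(* Let $n\ge 3$ and let $s,t\in S_n$ be such that the commutator $[s,t]=sts^{-1}t^{-1}$ is the $3$-cycle $(z\;y\;x)$ (i.e. $z\mapsto y\mapsto x\mapsto z$), with $x,y,z$ distinct. Then exactly one of the following holds: (a) $x,y,z$ lie in the same cycle of $s$, in this cyclic order, i.e. $d_s(x,y)+d_s(y,z)+d_s(z,x)=d_s(x,x)$; (b) for some cyclic relabeling $(x',y',z')$ of $(x,y,z)$ (one of $(x,y,z)$, $(y,z,x)$, $(z,x,y)$, so that $(z'\;y'\;x')=(z\;y\;x)$), the points $x'$ and $y'$ lie in the same cycle of $s$, the point $z'$ lies in a different cycle of $s$, and $d_s(z',z')=d_s(y',x')$.
   Context: Permutations are composed as functions: $(st)(i)=s(t(i))$. For $s\in S_n$, the $s$-distance $d_s:\{1,\dots,n\}^2\to\mathbb{N}\cup\{\infty\}$ is defined by $d_s(u,v)=\min\{d\ge 1: s^d(u)=v\}$ if $u,v$ lie in the same cycle of $s$, and $d_s(u,v)=\infty$ otherwise. In particular $d_s(u,u)$ is the length of the cycle of $s$ containing $u$. *)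

theory Defs
  imports Main "HOL-Combinatorics.Combinatorics" "HOL-Library.Extended_Nat"
begin

definition sdist :: "(nat \<Rightarrow> nat) \<Rightarrow> nat \<Rightarrow> nat \<Rightarrow> enat" where
  "sdist s u v =
     (if \<exists>d\<ge>1. (s ^^ d) u = v then enat (LEAST d. d \<ge> 1 \<and> (s ^^ d) u = v) else \<infinity>)"

end

theory Submission
  imports Defs
begin

(* From [s,t] = (z y x) we get t s t^-1 = r s with r = (x y z), so r s is
   conjugate to s and has the same cycle type.  Since r moves only the points of
   W = {x,y,z}, the cycles of s and of r s that avoid W coincide; hence the cycles of s
   through W and the cycles of r s through W have the same multiset of lengths, which
   we encode by the sums over these cycles of H (cycle length), for every H.

   Walking along s from a point of W until W is met again defines a "first hit"
   permutation of W together with gap lengths; r s has the same gaps and first-hit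
   permutation r composed with that of s.  Comparing cycle structures in the six possible
   cases: the identity and the reversed 3-cycle are impossible (one vs three cycles),
   the 3-cycle x -> y -> z gives alternative (a), and a transposition u <-> v fixing w
   forces, by comparing sums of squared cycle lengths, gap(w) = gap(v), which is
   alternative (b).  Finally (a) puts x, y, z on a single cycle while (b) does not, so the
   two alternatives exclude each other. *)

lemma sdist_eq_funpow_dist1:
  assumes "v \<in> orbit f u" shows "sdist f u v = enat (funpow_dist1 f u v)"
proof -
  have ex: "\<exists>d\<ge>1. (f ^^ d) u = v" using assms by (auto simp: orbit_altdef Suc_le_eq)
  have "(LEAST d. d \<ge> 1 \<and> (f ^^ d) u = v) = funpow_dist1 f u v"
  proof (rule Least_equality)
    show "1 \<le> funpow_dist1 f u v \<and> (f ^^ funpow_dist1 f u v) u = v"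
      using funpow_dist1_prop[OF assms] by simp
  next
    fix d assume "1 \<le> d \<and> (f ^^ d) u = v"
    then show "funpow_dist1 f u v \<le> d" using funpow_dist1_least[of d f u v] by force
  qed
  then show ?thesis using ex unfolding sdist_def by simp
qed

lemma sdist_infinite_iff: "sdist f u v = \<infinity> \<longleftrightarrow> v \<notin> orbit f u"
proof
  assume "sdist f u v = \<infinity>" then show "v \<notin> orbit f u" using sdist_eq_funpow_dist1 by force
next
  assume "v \<notin> orbit f u" then show "sdist f u v = \<infinity>"
    unfolding sdist_def by (auto simp: orbit_altdef Suc_le_eq)
qed

lemma orbit_eq_of_mem:
  "permutation f \<Longrightarrow> v \<in> orbit f u \<Longrightarrow> orbit f v = orbit f u"
  by (metis cyclic_on_orbit' orbit_cyclic_eq3)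

lemma card_orbit_eq_return_time:
  assumes "permutation f" shows "card (orbit f u) = funpow_dist1 f u u"
proof -
  have "u \<in> orbit f u" using assms by (rule permutation_self_in_orbit)
  then show ?thesis
    using orbit_conv_funpow_dist1[of u f] inj_on_funpow_dist1[of u f u] card_image by fastforce
qed

section \<open>First hits of a set along an orbit\<close>

definition first_hit :: "('a \<Rightarrow> 'a) \<Rightarrow> 'a set \<Rightarrow> 'a \<Rightarrow> 'a \<Rightarrow> nat \<Rightarrow> bool" where
  "first_hit f W u v a \<longleftrightarrow> 0 < a \<and> (f ^^ a) u = v \<and> (\<forall>j. 0 < j \<and> j < a \<longrightarrow> (f ^^ j) u \<notin> W)"

text \<open>Every point of W hits W again, since permutations of finite support are periodic.\<close>

lemma first_hit_exists:
  assumes "permutation f" "u \<in> W"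
  obtains v a where "v \<in> W" "first_hit f W u v a"
proof -
  obtain L where L: "0 < L" "(f ^^ L) u = u" by (rule permutation_self[OF assms(1)])
  define a where "a = (LEAST k. 0 < k \<and> (f ^^ k) u \<in> W)"
  have a: "0 < a \<and> (f ^^ a) u \<in> W"
    unfolding a_def by (rule LeastI[of _ L]) (use L assms(2) in simp)
  have "\<not> (0 < j \<and> (f ^^ j) u \<in> W)" if "j < a" for j
    using that unfolding a_def by (rule not_less_Least)
  then have "first_hit f W u ((f ^^ a) u) a" using a by (auto simp: first_hit_def)
  with a show ?thesis using that by blast
qed

lemma first_hit_dist:
  assumes "first_hit f W u v a" "v \<in> W"
  shows "v \<in> orbit f u" "funpow_dist1 f u v = a"
proof -
  show vo: "v \<in> orbit f u" using assms(1) unfolding first_hit_def orbit_altdef by blast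
  have "\<not> a < funpow_dist1 f u v"
    using funpow_dist1_least[of a f u v] assms(1) by (auto simp: first_hit_def)
  moreover have "\<not> funpow_dist1 f u v < a"
    using funpow_dist1_prop[OF vo] assms by (auto simp: first_hit_def)
  ultimately show "funpow_dist1 f u v = a" by simp
qed

lemma funpow_split:
  assumes "a \<le> j" shows "(f ^^ j) u = (f ^^ (j - a)) ((f ^^ a) u)"
proof -
  have "f ^^ j = f ^^ (j - a) \<circ> f ^^ a" using assms by (simp add: funpow_add[symmetric])
  then show ?thesis by simp
qed

lemma first_hit_mono: "W' \<subseteq> W \<Longrightarrow> first_hit f W u v a \<Longrightarrow> first_hit f W' u v a"
  by (auto simp: first_hit_def)

lemma first_hit_concat:
  assumes uv: "first_hit f W u v a" and vw: "first_hit f W v w b"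
  shows "first_hit f (W - {v}) u w (a + b)"
proof -
  have shift: "(f ^^ j) u = (f ^^ (j - a)) v" if "a \<le> j" for j
    using uv funpow_split[OF that, of f u] by (simp add: first_hit_def)
  have "(f ^^ j) u \<notin> W - {v}" if "0 < j" "j < a + b" for j
  proof (cases "a \<le> j")
    case True
    then show ?thesis using shift[OF True] vw that by (cases "j = a") (auto simp: first_hit_def)
  next
    case False
    then show ?thesis using uv that by (auto simp: first_hit_def)
  qed
  moreover have "(f ^^ (a + b)) u = w" using shift[of "a + b"] vw by (simp add: first_hit_def)
  ultimately show ?thesis using uv by (auto simp: first_hit_def)
qed

lemma first_hit_loop_orbit:
  assumes "first_hit f W u u a" shows "orbit f u \<inter> W \<subseteq> {u}"
proof
  fix q assume q: "q \<in> orbit f u \<inter> W"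
  have "orbit f u = {(f ^^ m) u | m. m < a}"
    using assms by (intro orbit_altdef_bounded) (auto simp: first_hit_def)
  then obtain m where "m < a" "q = (f ^^ m) u" using q by blast
  then show "q \<in> {u}" using assms q by (cases "m = 0") (auto simp: first_hit_def)
qed

lemma first_hit_loop_separates:
  assumes "permutation f" "first_hit f W u u a" "v \<in> W" "v \<noteq> u"
  shows "v \<notin> orbit f u" "orbit f v \<noteq> orbit f u"
proof -
  show nv: "v \<notin> orbit f u" using first_hit_loop_orbit[OF assms(2)] assms(3,4) by blast
  show "orbit f v \<noteq> orbit f u" using permutation_self_in_orbit[OF assms(1), of v] nv by auto
qed

lemma first_hit_loop_card:
  assumes "permutation f" "first_hit f W u u a" "u \<in> W" shows "card (orbit f u) = a"
  using card_orbit_eq_return_time[OF assms(1)] first_hit_dist[OF assms(2,3)] by simp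

lemma first_hit_inj:
  assumes "inj f" "first_hit f W u m a" "first_hit f W v m b" "u \<in> W" "v \<in> W"
  shows "u = v"
proof -
  have ordered: "u = v"
    if "first_hit f W u m a" "first_hit f W v m b" "u \<in> W" "a \<le> b" for u v a b
  proof -
    have "(f ^^ a) ((f ^^ (b - a)) v) = (f ^^ a) u"
      using that funpow_split[of "b - a" b f v] by (simp add: first_hit_def funpow_add[symmetric])
    then have "(f ^^ (b - a)) v = u" using inj_fn[OF assms(1), of a] by (simp add: inj_eq)
    then show "u = v" using that by (cases "b - a = 0") (auto simp: first_hit_def)
  qed
  show ?thesis using ordered[of u a v b] ordered[of v b u a] assms by (cases "a \<le> b") auto
qed

lemma first_hit_transfer:
  assumes "first_hit s W u v a" "\<And>i. i \<notin> W \<Longrightarrow> r i = i"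
  shows "first_hit (r \<circ> s) W u (r v) a"
proof -
  have eq: "((r \<circ> s) ^^ j) u = (s ^^ j) u" if "j < a" for j
    using that
  proof (induction j)
    case (Suc j)
    then have "(s ^^ Suc j) u \<notin> W" using assms(1) unfolding first_hit_def by blast
    then show ?case using Suc by (simp add: assms(2))
  qed simp
  have "0 < a" using assms(1) by (simp add: first_hit_def)
  then have "((r \<circ> s) ^^ a) u = r ((s ^^ a) u)" using eq[of "a - 1"] by (cases a) auto
  then show ?thesis using assms(1) eq by (auto simp: first_hit_def)
qed

section \<open>Cycle sums\<close>

text \<open>The sum of H (cycle length) over the cycles of f through A.  Knowing these sums for
  all H amounts to knowing the cycle type of f restricted to the cycles meeting A.\<close>

definition cycle_sum :: "(nat \<Rightarrow> nat) \<Rightarrow> ('a \<Rightarrow> 'a) \<Rightarrow> 'a set \<Rightarrow> nat" where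
  "cycle_sum H f A = (\<Sum>X \<in> orbit f ` A. H (card X))"

lemma cycle_sum_three_loops:
  assumes f: "permutation f" and W: "W = {u, v, w}" and d: "distinct [u, v, w]"
    and hu: "first_hit f W u u a" and hv: "first_hit f W v v b" and hw: "first_hit f W w w c"
  shows "cycle_sum H f W = H a + H b + H c"
proof -
  have "u \<in> W" "v \<in> W" "w \<in> W" using W by auto
  moreover have "orbit f v \<noteq> orbit f u" "orbit f w \<noteq> orbit f u" "orbit f w \<noteq> orbit f v"
    using first_hit_loop_separates(2)[OF f hu] first_hit_loop_separates(2)[OF f hv] W d by auto
  ultimately show ?thesis
    unfolding cycle_sum_def W using first_hit_loop_card[OF f] hu hv hw W
    by (simp add: add.assoc)
qed

lemma cycle_sum_two_cycle_and_loop: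
  assumes f: "permutation f" and W: "W = {u, v, w}" and d: "distinct [u, v, w]"
    and huv: "first_hit f W u v a" and hvu: "first_hit f W v u b" and hw: "first_hit f W w w c"
  shows "cycle_sum H f W = H (a + b) + H c"
proof -
  have loop: "first_hit f (W - {v}) u u (a + b)" using first_hit_concat[OF huv hvu] .
  have "u \<in> W - {v}" "v \<in> W" "w \<in> W" using W d by auto
  then have card: "card (orbit f u) = a + b" "card (orbit f w) = c"
    and same: "orbit f v = orbit f u"
    using first_hit_loop_card[OF f] loop hw orbit_eq_of_mem[OF f first_hit_dist(1)[OF huv]] by auto
  have "orbit f u \<noteq> orbit f w" using first_hit_loop_separates(2)[OF f hw] W d by auto
  moreover have "orbit f ` W = {orbit f u, orbit f w}" using W same by auto
  ultimately show ?thesis unfolding cycle_sum_def using card by simp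
qed

lemma first_hit_three_cycle:
  assumes huv: "first_hit f W u v a" and hvw: "first_hit f W v w b" and hwu: "first_hit f W w u c"
  shows "first_hit f (W - {v} - {w}) u u (a + b + c)"
  using first_hit_concat[OF first_hit_concat[OF huv hvw] first_hit_mono[OF _ hwu]] by auto

lemma cycle_sum_three_cycle:
  assumes f: "permutation f" and W: "W = {u, v, w}" and d: "distinct [u, v, w]"
    and huv: "first_hit f W u v a" and hvw: "first_hit f W v w b" and hwu: "first_hit f W w u c"
  shows "cycle_sum H f W = H (a + b + c)"
proof -
  have "u \<in> W - {v} - {w}" "v \<in> W" "w \<in> W" using W d by auto
  then have "card (orbit f u) = a + b + c"
    and "orbit f v = orbit f u" "orbit f w = orbit f u"
    using first_hit_loop_card[OF f first_hit_three_cycle[OF huv hvw hwu]]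
      orbit_eq_of_mem[OF f first_hit_dist(1)[OF huv]]
      orbit_eq_of_mem[OF f first_hit_dist(1)[OF hwu]] orbit_eq_of_mem[OF f]
    by auto
  moreover have "orbit f ` W = {orbit f u}" using W calculation(2,3) by auto
  ultimately show ?thesis unfolding cycle_sum_def by simp
qed

section \<open>Cycle sums under conjugation and under a change inside W\<close>

lemma funpow_conj:
  assumes "bij t" shows "(t \<circ> s \<circ> inv t) ^^ k = t \<circ> (s ^^ k) \<circ> inv t"
proof (induction k)
  case 0 then show ?case by (simp add: fun_eq_iff surj_f_inv_f[OF bij_is_surj[OF assms]])
next
  case (Suc k)
  then show ?case using assms by (simp add: fun_eq_iff bij_is_inj)
qed

lemma orbit_conj:
  assumes "bij t" shows "orbit (t \<circ> s \<circ> inv t) (t i) = t ` orbit s i"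
  using funpow_conj[OF assms] bij_is_inj[OF assms] by (auto simp: orbit_altdef)

lemma cycle_sum_conj:
  assumes "t permutes S" shows "cycle_sum H (t \<circ> s \<circ> inv t) S = cycle_sum H s S"
proof -
  have bt: "bij t" using assms by (rule permutes_bij)
  have "orbit (t \<circ> s \<circ> inv t) ` S = image t ` orbit s ` S"
    using permutes_image[OF assms] orbit_conj[OF bt] by (metis (no_types, lifting) image_cong image_image)
  moreover have "inj_on (image t) (orbit s ` S)"
    using bij_is_inj[OF bt] by (auto simp: inj_on_def inj_image_eq_iff)
  ultimately show ?thesis
    unfolding cycle_sum_def using bij_is_inj[OF bt]
    by (simp add: sum.reindex card_image inj_on_subset)
qed

text \<open>Let p agree with s except at points that s maps into W (as p = r s does when r
  permutes W).  Every point on an s-cycle through W lies on a p-cycle through W, and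
  s-cycles avoiding W are p-cycles.\<close>

lemma orbit_local_change_meets:
  assumes s: "permutation s" and p: "permutation p" and agree: "\<And>q. s q \<notin> W \<Longrightarrow> p q = s q"
    and w: "w \<in> W" and i: "i \<in> orbit s w"
  shows "\<exists>w' \<in> W. i \<in> orbit p w'"
proof -
  have "\<exists>w' \<in> W. (s ^^ m) w \<in> orbit p w'" for m
  proof (induction m)
    case 0 then show ?case using w permutation_self_in_orbit[OF p, of w] by auto
  next
    case (Suc m)
    then obtain w' where w': "w' \<in> W" "(s ^^ m) w \<in> orbit p w'" by blast
    show ?case
    proof (cases "s ((s ^^ m) w) \<in> W")
      case True then show ?thesis using permutation_self_in_orbit[OF p] by auto
    next
      case False
      then have "p ((s ^^ m) w) = (s ^^ Suc m) w" by (simp add: agree)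
      then show ?thesis using w' orbit.step[OF w'(2)] by metis
    qed
  qed
  then show ?thesis using i unfolding orbit_altdef_permutation[OF s] by blast
qed

lemma orbit_local_change_avoids:
  assumes s: "permutation s" and agree: "\<And>q. s q \<notin> W \<Longrightarrow> p q = s q"
    and avoid: "\<forall>w \<in> W. i \<notin> orbit s w"
  shows "orbit p i = orbit s i"
proof (rule orbit_cong[OF permutation_self_in_orbit[OF s]])
  fix q assume q: "q \<in> orbit s i"
  then have "orbit s (s q) = orbit s i" using orbit_eq_of_mem[OF s orbit.step] by blast
  then have "s q \<notin> W" using avoid permutation_self_in_orbit[OF s] by blast
  then show "p q = s q" by (rule agree)
qed

lemma cycle_sum_local:
  assumes sp: "s permutes S" and fin: "finite S" and WS: "W \<subseteq> S" and rp: "r permutes W"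
    and eq: "cycle_sum H (r \<circ> s) S = cycle_sum H s S"
  shows "cycle_sum H s W = cycle_sum H (r \<circ> s) W"
proof -
  define p where "p = r \<circ> s"
  have s: "permutation s" using fin sp by (rule permutes_imp_permutation)
  have p: "permutation p"
    unfolding p_def using fin permutes_compose[OF sp permutes_subset[OF rp WS]]
    by (rule permutes_imp_permutation)
  have agree: "p q = s q" if "s q \<notin> W" for q
    unfolding p_def using rp that by (simp add: permutes_not_in)
  have split: "orbit p ` S = (orbit s ` S - orbit s ` W) \<union> orbit p ` W"
  proof (intro set_eqI iffI)
    fix X assume "X \<in> orbit p ` S"
    then obtain i where i: "i \<in> S" "X = orbit p i" by blast
    show "X \<in> (orbit s ` S - orbit s ` W) \<union> orbit p ` W"
    proof (cases "\<exists>w \<in> W. i \<in> orbit s w")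
      case True
      then obtain w' where "w' \<in> W" "i \<in> orbit p w'"
        using orbit_local_change_meets[OF s p agree] by blast
      then show ?thesis using i orbit_eq_of_mem[OF p] by auto
    next
      case False
      then have "orbit p i = orbit s i" "orbit s i \<notin> orbit s ` W"
        using orbit_local_change_avoids[OF s agree] permutation_self_in_orbit[OF s, of i] by auto
      then show ?thesis using i by auto
    qed
  next
    fix X assume "X \<in> (orbit s ` S - orbit s ` W) \<union> orbit p ` W"
    then consider i where "i \<in> S" "X = orbit s i" "orbit s i \<notin> orbit s ` W"
      | w where "w \<in> W" "X = orbit p w" by blast
    then show "X \<in> orbit p ` S"
    proof cases
      case 1
      then have "\<forall>w \<in> W. i \<notin> orbit s w" using orbit_eq_of_mem[OF s] by blast
      then have "orbit p i = X" using 1 orbit_local_change_avoids[OF s agree] by auto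
      then show ?thesis using 1 by blast
    next
      case 2 then show ?thesis using WS by auto
    qed
  qed
  have disjoint: "(orbit s ` S - orbit s ` W) \<inter> orbit p ` W = {}"
  proof (rule ccontr)
    assume "\<not> ?thesis"
    then obtain i w where "orbit s i \<notin> orbit s ` W" "w \<in> W" "orbit s i = orbit p w" by blast
    moreover have "orbit s w = orbit s i"
      using calculation(3) permutation_self_in_orbit[OF p, of w] orbit_eq_of_mem[OF s] by auto
    ultimately show False by auto
  qed
  have fin_orbits: "finite (orbit s ` S)" "finite (orbit p ` W)" using fin WS finite_subset by auto
  have "cycle_sum H p S = (\<Sum>X \<in> orbit s ` S - orbit s ` W. H (card X)) + cycle_sum H p W"
    unfolding cycle_sum_def split using fin_orbits disjoint by (simp add: sum.union_disjoint)
  moreover have "cycle_sum H s S = (\<Sum>X \<in> orbit s ` S - orbit s ` W. H (card X)) + cycle_sum H s W"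
    unfolding cycle_sum_def using fin_orbits WS by (simp add: sum.subset_diff image_mono)
  ultimately show ?thesis using eq unfolding p_def by simp
qed

lemma commutator_conj:
  assumes "bij s" "bij t" "s \<circ> t \<circ> inv s \<circ> inv t = c" "r \<circ> c = id"
  shows "t \<circ> s \<circ> inv t = r \<circ> s"
proof
  fix i
  have "(t \<circ> s \<circ> inv t) i = r (c (t (s (inv t i))))" using fun_cong[OF assms(4)] by simp
  also have "c (t (s (inv t i))) = s i"
    using assms(1-3) by (auto simp: bij_is_inj bij_is_surj surj_f_inv_f)
  finally show "(t \<circ> s \<circ> inv t) i = (r \<circ> s) i" by simp
qed

lemma three_cycle_values:
  assumes "distinct [a, b, c]"
  shows "cycle_of_list [a, b, c] a = b" "cycle_of_list [a, b, c] b = c"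
    "cycle_of_list [a, b, c] c = a"
  using assms by (auto simp: Transposition.transpose_def)

lemma three_cycle_inverse:
  assumes "distinct [x, y, z]"
  shows "cycle_of_list [x, y, z] \<circ> cycle_of_list [z, y, x] = id"
proof
  fix i
  have d: "distinct [z, y, x]" using assms by auto
  show "(cycle_of_list [x, y, z] \<circ> cycle_of_list [z, y, x]) i = id i"
  proof (cases "i \<in> {x, y, z}")
    case True then show ?thesis using three_cycle_values[OF assms] three_cycle_values[OF d] by auto
  next
    case False then show ?thesis using id_outside_supp[of i "[z, y, x]"] id_outside_supp[of i "[x, y, z]"]
      by simp
  qed
qed

section \<open>The case analysis\<close>

text \<open>Transposition case: s swaps u and v
  (gaps a, b) and fixes w (gap c); since r s then swaps u and w (gaps a, c) and fixes v
  (gap b), the cycle lengths a + b, c and a + c, b agree, whence b = c.\<close>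

lemma transposition_case:
  assumes s: "permutation s" and p: "permutation p" and W: "W = {u, v, w}" and d: "distinct [u, v, w]"
    and huv: "first_hit s W u v a" and hvu: "first_hit s W v u b" and hw: "first_hit s W w w c"
    and puw: "first_hit p W u w a" and pwu: "first_hit p W w u c" and pv: "first_hit p W v v b"
    and balanced: "\<And>H. cycle_sum H s W = cycle_sum H p W"
  shows "sdist s u v \<noteq> \<infinity> \<and> sdist s u w = \<infinity> \<and> sdist s w w = sdist s v u"
proof -
  have "(a + b) * (a + b) + c * c = (a + c) * (a + c) + b * b"
    using balanced[of "\<lambda>k. k * k"] cycle_sum_two_cycle_and_loop[OF s W d huv hvu hw]
      cycle_sum_two_cycle_and_loop[OF p _ _ puw pwu pv] W d by (simp add: insert_commute)
  then have "a * b + a * b = a * c + a * c" by (simp add: algebra_simps)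
  then have "a * b = a * c" by linarith
  moreover have "0 < a" using huv by (simp add: first_hit_def)
  ultimately have bc: "b = c" by simp
  have inW: "u \<in> W" "v \<in> W" "w \<in> W" and "u \<noteq> w" using W d by auto
  then have "u \<notin> orbit s w" by (intro first_hit_loop_separates(1)[OF s hw])
  then have "w \<notin> orbit s u" using orbit_eq_of_mem[OF s] permutation_self_in_orbit[OF s] by metis
  then show ?thesis
    using bc first_hit_dist[OF huv inW(2)] first_hit_dist[OF hvu inW(1)] first_hit_dist[OF hw inW(3)]
    by (simp add: sdist_infinite_iff sdist_eq_funpow_dist1)
qed

lemma three_cycle_case:
  assumes s: "permutation s" and W: "W = {u, v, w}" and d: "distinct [u, v, w]"
    and huv: "first_hit s W u v a" and hvw: "first_hit s W v w b" and hwu: "first_hit s W w u c"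
  shows "sdist s u v + sdist s v w + sdist s w u = sdist s u u"
proof -
  have "u \<in> W - {v} - {w}" "u \<in> W" "v \<in> W" "w \<in> W" using W d by auto
  then show ?thesis
    using first_hit_dist[OF first_hit_three_cycle[OF huv hvw hwu]]
      first_hit_dist[OF huv] first_hit_dist[OF hvw] first_hit_dist[OF hwu]
    by (simp add: sdist_eq_funpow_dist1)
qed

lemma three_point_classification:
  assumes s: "permutation s" and W: "W = {x, y, z}" and d: "distinct [x, y, z]"
    and rp: "r permutes W" and rx: "r x = y" and ry: "r y = z" and rz: "r z = x"
    and balanced: "\<And>H. cycle_sum H s W = cycle_sum H (r \<circ> s) W"
  shows "sdist s x y + sdist s y z + sdist s z x = sdist s x x
    \<or> (\<exists>(x', y', z') \<in> {(x, y, z), (y, z, x), (z, x, y)}.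
         sdist s x' y' \<noteq> \<infinity> \<and> sdist s x' z' = \<infinity> \<and> sdist s z' z' = sdist s y' x')"
proof -
  have "permutation r" using _ rp by (rule permutes_imp_permutation) (simp add: W)
  then have p: "permutation (r \<circ> s)" using s by (rule permutation_compose)
  have r: "r i = i" if "i \<notin> W" for i using rp that by (rule permutes_not_in)
  have inW: "x \<in> W" "y \<in> W" "z \<in> W" using W by auto
  obtain nx hx where nx: "nx \<in> W" "first_hit s W x nx hx" using first_hit_exists[OF s inW(1)] .
  obtain ny hy where ny: "ny \<in> W" "first_hit s W y ny hy" using first_hit_exists[OF s inW(2)] .
  obtain nz hz where nz: "nz \<in> W" "first_hit s W z nz hz" using first_hit_exists[OF s inW(3)] .
  note px = first_hit_transfer[OF nx(2) r] and py = first_hit_transfer[OF ny(2) r]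
    and pz = first_hit_transfer[OF nz(2) r]
  have injs: "inj s" using permutation_bijective[OF s] by (rule bij_is_inj)
  have "nx \<noteq> ny" using first_hit_inj[OF injs nx(2) _ inW(1,2)] ny(2) d by auto
  moreover have "nx \<noteq> nz" using first_hit_inj[OF injs nx(2) _ inW(1,3)] nz(2) d by auto
  moreover have "ny \<noteq> nz" using first_hit_inj[OF injs ny(2) _ inW(2,3)] nz(2) d by auto
  moreover have "nx = x \<or> nx = y \<or> nx = z" "ny = x \<or> ny = y \<or> ny = z" "nz = x \<or> nz = y \<or> nz = z"
    using nx(1) ny(1) nz(1) W by auto
  ultimately consider "nx = x" "ny = y" "nz = z" | "nx = y" "ny = z" "nz = x"
    | "nx = z" "ny = x" "nz = y" | "nx = y" "ny = x" "nz = z"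
    | "nx = x" "ny = z" "nz = y" | "nx = z" "ny = y" "nz = x"
    by (elim disjE) simp_all
  then show ?thesis
  proof cases
    case 1
    have "cycle_sum (\<lambda>_. 1) s W = 3"
      using cycle_sum_three_loops[OF s W d nx(2)[unfolded 1] ny(2)[unfolded 1] nz(2)[unfolded 1]]
      by simp
    moreover have "cycle_sum (\<lambda>_. 1) (r \<circ> s) W = 1"
      using cycle_sum_three_cycle[OF p W d px[unfolded 1 rx] py[unfolded 1 ry] pz[unfolded 1 rz]]
      by simp
    ultimately show ?thesis using balanced[of "\<lambda>_. 1"] by simp
  next
    case 2
    then show ?thesis
      using three_cycle_case[OF s W d nx(2)[unfolded 2] ny(2)[unfolded 2] nz(2)[unfolded 2]] by simp
  next
    case 3
    have W': "W = {x, z, y}" and d': "distinct [x, z, y]" using W d by auto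
    have "cycle_sum (\<lambda>_. 1) s W = 1"
      using cycle_sum_three_cycle[OF s W' d' nx(2)[unfolded 3] nz(2)[unfolded 3] ny(2)[unfolded 3]]
      by simp
    moreover have "cycle_sum (\<lambda>_. 1) (r \<circ> s) W = 3"
      using cycle_sum_three_loops[OF p W d px[unfolded 3 rz] py[unfolded 3 rx] pz[unfolded 3 ry]]
      by simp
    ultimately show ?thesis using balanced[of "\<lambda>_. 1"] by simp
  next
    case 4
    have "sdist s x y \<noteq> \<infinity> \<and> sdist s x z = \<infinity> \<and> sdist s z z = sdist s y x"
      using transposition_case[OF s p W d nx(2)[unfolded 4] ny(2)[unfolded 4] nz(2)[unfolded 4]
          px[unfolded 4 ry] pz[unfolded 4 rz] py[unfolded 4 rx] balanced] .
    then show ?thesis by blast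
  next
    case 5
    have W': "W = {y, z, x}" and d': "distinct [y, z, x]" using W d by auto
    have "sdist s y z \<noteq> \<infinity> \<and> sdist s y x = \<infinity> \<and> sdist s x x = sdist s z y"
      using transposition_case[OF s p W' d' ny(2)[unfolded 5] nz(2)[unfolded 5] nx(2)[unfolded 5]
          py[unfolded 5 rz] px[unfolded 5 rx] pz[unfolded 5 ry] balanced] .
    then show ?thesis by blast
  next
    case 6
    have W': "W = {z, x, y}" and d': "distinct [z, x, y]" using W d by auto
    have "sdist s z x \<noteq> \<infinity> \<and> sdist s z y = \<infinity> \<and> sdist s y y = sdist s x z"
      using transposition_case[OF s p W' d' nz(2)[unfolded 6] nx(2)[unfolded 6] ny(2)[unfolded 6]
          pz[unfolded 6 rx] py[unfolded 6 ry] px[unfolded 6 rz] balanced] .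
    then show ?thesis by blast
  qed
qed

text \<open>Alternative (a) puts x, y, z on one cycle of s, which alternative (b) forbids.\<close>

lemma cyclic_order_excludes_split:
  assumes s: "permutation s" and a: "sdist s x y + sdist s y z + sdist s z x = sdist s x x"
    and rot: "(x', y', z') \<in> {(x, y, z), (y, z, x), (z, x, y)}"
  shows "sdist s x' z' \<noteq> \<infinity>"
proof -
  have "sdist s x x \<noteq> \<infinity>" using permutation_self_in_orbit[OF s] by (simp add: sdist_infinite_iff)
  then have "sdist s x y + sdist s y z + sdist s z x \<noteq> \<infinity>" using a by simp
  then have "sdist s x y \<noteq> \<infinity>" "sdist s y z \<noteq> \<infinity>" "sdist s z x \<noteq> \<infinity>"
    by (simp_all add: plus_eq_infty_iff_enat)
  then have "y \<in> orbit s x" "z \<in> orbit s y" "x \<in> orbit s z" by (simp_all add: sdist_infinite_iff)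
  then have "orbit s y = orbit s x" "orbit s z = orbit s x" using orbit_eq_of_mem[OF s] by metis+
  then show ?thesis
    using rot permutation_self_in_orbit[OF s] by (auto simp: sdist_infinite_iff)
qed

theorem lemma1:
  fixes n :: nat and s t :: "nat \<Rightarrow> nat" and x y z :: nat
  assumes "n \<ge> 3"
    and "s permutes {1..n}" and "t permutes {1..n}"
    and "x \<in> {1..n}" and "y \<in> {1..n}" and "z \<in> {1..n}"
    and "distinct [x, y, z]"
    and "s \<circ> t \<circ> inv s \<circ> inv t = cycle_of_list [z, y, x]"
  shows "(sdist s x y + sdist s y z + sdist s z x = sdist s x x)
         \<noteq> (\<exists>(x', y', z') \<in> {(x, y, z), (y, z, x), (z, x, y)}.
               sdist s x' y' \<noteq> \<infinity> \<and> sdist s x' z' = \<infinity> \<and>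
               sdist s z' z' = sdist s y' x')"
proof -
  define W where "W = {x, y, z}"
  define r where "r = cycle_of_list [x, y, z]"
  have WS: "W \<subseteq> {1..n}" using assms(4-6) by (simp add: W_def)
  have rp: "r permutes W" unfolding r_def W_def using cycle_permutes[of "[x, y, z]"] by simp
  have conj: "t \<circ> s \<circ> inv t = r \<circ> s"
    using commutator_conj[OF permutes_bij[OF assms(2)] permutes_bij[OF assms(3)] assms(8)]
      three_cycle_inverse[OF assms(7)] by (simp add: r_def)
  have balanced: "cycle_sum H s W = cycle_sum H (r \<circ> s) W" for H
    using cycle_sum_local[OF assms(2) _ WS rp] cycle_sum_conj[OF assms(3), of H s] conj by simp
  have s: "permutation s" using _ assms(2) by (rule permutes_imp_permutation) simp
  have "sdist s x y + sdist s y z + sdist s z x = sdist s x x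
    \<or> (\<exists>(x', y', z') \<in> {(x, y, z), (y, z, x), (z, x, y)}.
         sdist s x' y' \<noteq> \<infinity> \<and> sdist s x' z' = \<infinity> \<and> sdist s z' z' = sdist s y' x')"
    using three_point_classification[OF s W_def assms(7) rp _ _ _ balanced]
      three_cycle_values[OF assms(7)] by (simp add: r_def)
  then show ?thesis using cyclic_order_excludes_split[OF s] by blast
qed

end
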